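(* There is no connected, non-complete, $5$-regular and $1$ net-regular SRSG in $\mathcal C_1\cup\mathcal C_4\cup\mathcal C_5$ with parameters $(n,5,a,b,c)$ satisfying $(a,b)=(2,0)$.
   Context: A signed graph $\dot G=(G,\sigma)$ is a simple graph $G$ with $\sigma:E(G)\to\{\pm1\}$; adjacency matrix $A_{\dot G}$ has entries $\sigma(v_iv_j)$ for adjacent vertices and $0$ otherwise. Degree and connectedness refer to $G$; net-degree is $d^+(v)-d^-(v)$; $\rho$ net-regular means all net-degrees equal $\rho$. $\dot G$ on $n$ vertices is an SRSG if it is neither homogeneous complete nor edgeless and there are $r\in\mathbb N$, $a,b,c\in\mathbb Z$ with $(A^2_{\dot G})_{ii}=r$, $(A^2_{\dot G})_{ij}=a$ for positive edges, $b$ for negative edges, $c$ for distinct non-adjacent pairs; parameters $(n,r,a,b,c)$. Classes: $\mathcal C_1$: $a=-b$ and (complete, or non-complete with $c\neq0$); $\mathcal C_4$: $a\ne-b$, non-complete, $c=0$; $\mathcal C_5$: $a\neq-b$, non-complete, $c\notin\{0,\frac{a+b}{2}\}$. *)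

theory Defs
  imports Main
begin

definition signed_graph :: "'a set \<Rightarrow> ('a \<Rightarrow> 'a \<Rightarrow> bool) \<Rightarrow> ('a \<Rightarrow> 'a \<Rightarrow> int) \<Rightarrow> bool" where
  "signed_graph V E \<sigma> \<longleftrightarrow> finite V
     \<and> (\<forall>u v. E u v \<longrightarrow> u \<in> V \<and> v \<in> V)
     \<and> (\<forall>u v. E u v \<longrightarrow> E v u)
     \<and> (\<forall>u. \<not> E u u)
     \<and> (\<forall>u v. E u v \<longrightarrow> \<sigma> u v = \<sigma> v u \<and> (\<sigma> u v = 1 \<or> \<sigma> u v = -1))"

definition adj :: "('a \<Rightarrow> 'a \<Rightarrow> bool) \<Rightarrow> ('a \<Rightarrow> 'a \<Rightarrow> int) \<Rightarrow> 'a \<Rightarrow> 'a \<Rightarrow> int" where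
  "adj E \<sigma> u v = (if E u v then \<sigma> u v else 0)"

definition adj_sq :: "'a set \<Rightarrow> ('a \<Rightarrow> 'a \<Rightarrow> bool) \<Rightarrow> ('a \<Rightarrow> 'a \<Rightarrow> int) \<Rightarrow> 'a \<Rightarrow> 'a \<Rightarrow> int" where
  "adj_sq V E \<sigma> u v = (\<Sum>w\<in>V. adj E \<sigma> u w * adj E \<sigma> w v)"

definition complete_graph :: "'a set \<Rightarrow> ('a \<Rightarrow> 'a \<Rightarrow> bool) \<Rightarrow> bool" where
  "complete_graph V E \<longleftrightarrow> (\<forall>u\<in>V. \<forall>v\<in>V. u \<noteq> v \<longrightarrow> E u v)"

definition edgeless :: "('a \<Rightarrow> 'a \<Rightarrow> bool) \<Rightarrow> bool" where
  "edgeless E \<longleftrightarrow> (\<forall>u v. \<not> E u v)"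

definition homogeneous_complete :: "'a set \<Rightarrow> ('a \<Rightarrow> 'a \<Rightarrow> bool) \<Rightarrow> ('a \<Rightarrow> 'a \<Rightarrow> int) \<Rightarrow> bool" where
  "homogeneous_complete V E \<sigma> \<longleftrightarrow> complete_graph V E \<and>
     ((\<forall>u v. E u v \<longrightarrow> \<sigma> u v = 1) \<or> (\<forall>u v. E u v \<longrightarrow> \<sigma> u v = -1))"

definition connected_graph :: "'a set \<Rightarrow> ('a \<Rightarrow> 'a \<Rightarrow> bool) \<Rightarrow> bool" where
  "connected_graph V E \<longleftrightarrow> (\<forall>u\<in>V. \<forall>v\<in>V. E\<^sup>*\<^sup>* u v)"

definition degree :: "'a set \<Rightarrow> ('a \<Rightarrow> 'a \<Rightarrow> bool) \<Rightarrow> 'a \<Rightarrow> nat" where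
  "degree V E v = card {w\<in>V. E v w}"

definition pos_degree :: "'a set \<Rightarrow> ('a \<Rightarrow> 'a \<Rightarrow> bool) \<Rightarrow> ('a \<Rightarrow> 'a \<Rightarrow> int) \<Rightarrow> 'a \<Rightarrow> nat" where
  "pos_degree V E \<sigma> v = card {w\<in>V. E v w \<and> \<sigma> v w = 1}"

definition neg_degree :: "'a set \<Rightarrow> ('a \<Rightarrow> 'a \<Rightarrow> bool) \<Rightarrow> ('a \<Rightarrow> 'a \<Rightarrow> int) \<Rightarrow> 'a \<Rightarrow> nat" where
  "neg_degree V E \<sigma> v = card {w\<in>V. E v w \<and> \<sigma> v w = -1}"

definition net_degree :: "'a set \<Rightarrow> ('a \<Rightarrow> 'a \<Rightarrow> bool) \<Rightarrow> ('a \<Rightarrow> 'a \<Rightarrow> int) \<Rightarrow> 'a \<Rightarrow> int" where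
  "net_degree V E \<sigma> v = int (pos_degree V E \<sigma> v) - int (neg_degree V E \<sigma> v)"

definition regular :: "'a set \<Rightarrow> ('a \<Rightarrow> 'a \<Rightarrow> bool) \<Rightarrow> nat \<Rightarrow> bool" where
  "regular V E k \<longleftrightarrow> (\<forall>v\<in>V. degree V E v = k)"

definition net_regular :: "'a set \<Rightarrow> ('a \<Rightarrow> 'a \<Rightarrow> bool) \<Rightarrow> ('a \<Rightarrow> 'a \<Rightarrow> int) \<Rightarrow> int \<Rightarrow> bool" where
  "net_regular V E \<sigma> \<rho> \<longleftrightarrow> (\<forall>v\<in>V. net_degree V E \<sigma> v = \<rho>)"

definition srsg :: "'a set \<Rightarrow> ('a \<Rightarrow> 'a \<Rightarrow> bool) \<Rightarrow> ('a \<Rightarrow> 'a \<Rightarrow> int)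
    \<Rightarrow> nat \<Rightarrow> nat \<Rightarrow> int \<Rightarrow> int \<Rightarrow> int \<Rightarrow> bool" where
  "srsg V E \<sigma> n r a b c \<longleftrightarrow> signed_graph V E \<sigma> \<and> n = card V
     \<and> \<not> homogeneous_complete V E \<sigma> \<and> \<not> edgeless E
     \<and> (\<forall>v\<in>V. adj_sq V E \<sigma> v v = int r)
     \<and> (\<forall>u\<in>V. \<forall>v\<in>V. E u v \<and> \<sigma> u v = 1 \<longrightarrow> adj_sq V E \<sigma> u v = a)
     \<and> (\<forall>u\<in>V. \<forall>v\<in>V. E u v \<and> \<sigma> u v = -1 \<longrightarrow> adj_sq V E \<sigma> u v = b)
     \<and> (\<forall>u\<in>V. \<forall>v\<in>V. u \<noteq> v \<and> \<not> E u v \<longrightarrow> adj_sq V E \<sigma> u v = c)"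

text \<open>Classes C1, C4, C5 (the condition c \<noteq> (a+b)/2 is written 2c \<noteq> a+b).\<close>
definition class_C1 :: "'a set \<Rightarrow> ('a \<Rightarrow> 'a \<Rightarrow> bool) \<Rightarrow> int \<Rightarrow> int \<Rightarrow> int \<Rightarrow> bool" where
  "class_C1 V E a b c \<longleftrightarrow> a = - b \<and> (complete_graph V E \<or> (\<not> complete_graph V E \<and> c \<noteq> 0))"

definition class_C4 :: "'a set \<Rightarrow> ('a \<Rightarrow> 'a \<Rightarrow> bool) \<Rightarrow> int \<Rightarrow> int \<Rightarrow> int \<Rightarrow> bool" where
  "class_C4 V E a b c \<longleftrightarrow> a \<noteq> - b \<and> \<not> complete_graph V E \<and> c = 0"

definition class_C5 :: "'a set \<Rightarrow> ('a \<Rightarrow> 'a \<Rightarrow> bool) \<Rightarrow> int \<Rightarrow> int \<Rightarrow> int \<Rightarrow> bool" where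
  "class_C5 V E a b c \<longleftrightarrow> a \<noteq> - b \<and> \<not> complete_graph V E \<and> c \<noteq> 0 \<and> 2 * c \<noteq> a + b"

end

theory Submission
  imports Defs
begin

(* Fix a vertex u with positive neighbours P(u) (three of them) and negative neighbours N(u) (two).
   The entries of A^2 at the five edges of u, together with |A_xy| <= 1, force P(u) to be a
   positive triangle and each negative neighbour of u to be adjacent to no other neighbour of u.

   As all row sums of A equal the net degree 1, all row sums of A^2 equal 1; in row u this reads
   5 + 3 * 2 + c * |R(u)| = 1 for the set R(u) of non-neighbours of u. R(u) contains the six
   positive neighbours of the two vertices of N(u), hence c = -1 and |R(u)| = 10. Each of the four
   remaining vertices w of R(u) has (A^2)_uw = -1, so it is a negative neighbour of some p in P(u).
   These four vertices are closed under positive neighbours, so they include a positive K4, and by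
   pigeonhole two adjacent vertices of it are negative neighbours of the same p, contradicting the
   local structure at p. *)

locale sgraph =
  fixes V :: "'a set" and E :: "'a \<Rightarrow> 'a \<Rightarrow> bool" and \<sigma> :: "'a \<Rightarrow> 'a \<Rightarrow> int"
  assumes signed_graph: "signed_graph V E \<sigma>"
begin

lemma finite_vertices: "finite V"
  and edge_vertices: "E u v \<Longrightarrow> u \<in> V \<and> v \<in> V"
  and edge_sym: "E u v \<Longrightarrow> E v u"
  and no_loop: "\<not> E u u"
  and sign_sym: "E u v \<Longrightarrow> \<sigma> u v = \<sigma> v u"
  and sign_cases: "E u v \<Longrightarrow> \<sigma> u v = 1 \<or> \<sigma> u v = -1"
  using signed_graph unfolding signed_graph_def by auto

abbreviation A :: "'a \<Rightarrow> 'a \<Rightarrow> int" where "A \<equiv> adj E \<sigma>"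

definition pos_nbrs :: "'a \<Rightarrow> 'a set" where
  "pos_nbrs u = {w\<in>V. E u w \<and> \<sigma> u w = 1}"

definition neg_nbrs :: "'a \<Rightarrow> 'a set" where
  "neg_nbrs u = {w\<in>V. E u w \<and> \<sigma> u w = -1}"

definition non_nbrs :: "'a \<Rightarrow> 'a set" where
  "non_nbrs u = {w\<in>V. w \<noteq> u \<and> \<not> E u w}"

lemma adj_sym: "A u v = A v u"
  unfolding adj_def using edge_sym sign_sym by metis

lemma adj_self [simp]: "A u u = 0"
  unfolding adj_def using no_loop by simp

lemma adj_cases: "A u v = 1 \<or> A u v = 0 \<or> A u v = -1"
  unfolding adj_def using sign_cases by auto

lemma adj_le_1: "A u v \<le> 1"
  using adj_cases[of u v] by auto

lemma adj_eq_1_iff: "A u v = 1 \<longleftrightarrow> v \<in> pos_nbrs u"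
  unfolding adj_def pos_nbrs_def using edge_vertices by auto

lemma adj_eq_minus_1_iff: "A u v = -1 \<longleftrightarrow> v \<in> neg_nbrs u"
  unfolding adj_def neg_nbrs_def using edge_vertices by auto

lemma adj_eq_0_iff: "A u v = 0 \<longleftrightarrow> \<not> E u v"
  unfolding adj_def using sign_cases by fastforce

lemma pos_nbrs_sym: "v \<in> pos_nbrs u \<longleftrightarrow> u \<in> pos_nbrs v"
  by (metis adj_eq_1_iff adj_sym)

lemma neg_nbrs_sym: "v \<in> neg_nbrs u \<longleftrightarrow> u \<in> neg_nbrs v"
  by (metis adj_eq_minus_1_iff adj_sym)

lemma pos_nbrs_subset: "pos_nbrs u \<subseteq> V"
  and neg_nbrs_subset: "neg_nbrs u \<subseteq> V"
  and non_nbrs_subset: "non_nbrs u \<subseteq> V"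
  unfolding pos_nbrs_def neg_nbrs_def non_nbrs_def by auto

lemma finite_pos_nbrs [simp]: "finite (pos_nbrs u)"
  and finite_neg_nbrs [simp]: "finite (neg_nbrs u)"
  and finite_non_nbrs [simp]: "finite (non_nbrs u)"
  by (rule finite_subset[OF pos_nbrs_subset finite_vertices]
        finite_subset[OF neg_nbrs_subset finite_vertices]
        finite_subset[OF non_nbrs_subset finite_vertices])+

lemma edge_iff_nbr: "E u v \<longleftrightarrow> v \<in> pos_nbrs u \<or> v \<in> neg_nbrs u"
  unfolding pos_nbrs_def neg_nbrs_def using edge_vertices sign_cases by auto

lemma pos_neg_nbrs_disjoint: "pos_nbrs u \<inter> neg_nbrs u = {}"
  unfolding pos_nbrs_def neg_nbrs_def by auto

lemma not_own_nbr: "u \<notin> pos_nbrs u" "u \<notin> neg_nbrs u" "u \<notin> non_nbrs u"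
  using no_loop unfolding pos_nbrs_def neg_nbrs_def non_nbrs_def by auto

lemma degree_eq: "degree V E u = card (pos_nbrs u) + card (neg_nbrs u)"
proof -
  have "{w\<in>V. E u w} = pos_nbrs u \<union> neg_nbrs u"
    using edge_iff_nbr pos_nbrs_subset neg_nbrs_subset edge_vertices by blast
  then show ?thesis
    unfolding degree_def using pos_neg_nbrs_disjoint by (simp add: card_Un_disjoint)
qed

lemma net_degree_eq: "net_degree V E \<sigma> u = int (card (pos_nbrs u)) - int (card (neg_nbrs u))"
  unfolding net_degree_def pos_degree_def neg_degree_def pos_nbrs_def neg_nbrs_def ..

lemma sum_vertices_split:
  assumes "u \<in> V"
  shows "(\<Sum>v\<in>V. f v) = f u + sum f (pos_nbrs u) + sum f (neg_nbrs u) + sum f (non_nbrs u)"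
proof -
  have "V = insert u (pos_nbrs u \<union> neg_nbrs u \<union> non_nbrs u)"
    using assms edge_iff_nbr pos_nbrs_subset neg_nbrs_subset unfolding non_nbrs_def by blast
  then have "sum f V = sum f (insert u (pos_nbrs u \<union> neg_nbrs u \<union> non_nbrs u))"
    by (rule arg_cong)
  also have "\<dots> = f u + sum f (pos_nbrs u \<union> neg_nbrs u \<union> non_nbrs u)"
    by (subst sum.insert) (simp_all add: not_own_nbr)
  also have "\<dots> = f u + sum f (pos_nbrs u) + sum f (neg_nbrs u) + sum f (non_nbrs u)"
  proof -
    have "(pos_nbrs u \<union> neg_nbrs u) \<inter> non_nbrs u = {}"
      using edge_iff_nbr unfolding non_nbrs_def by blast
    then show ?thesis
      by (simp add: sum.union_disjoint pos_neg_nbrs_disjoint add.assoc)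
  qed
  finally show ?thesis .
qed

lemma sum_adj_row: "(\<Sum>x\<in>V. A u x * f x) = sum f (pos_nbrs u) - sum f (neg_nbrs u)"
proof -
  have "A u x * f x = (if x \<in> pos_nbrs u then f x else 0) - (if x \<in> neg_nbrs u then f x else 0)" for x
    using adj_cases[of u x] adj_eq_1_iff[of u x] adj_eq_minus_1_iff[of u x] by auto
  then have "(\<Sum>x\<in>V. A u x * f x)
      = (\<Sum>x\<in>V. if x \<in> pos_nbrs u then f x else 0) - (\<Sum>x\<in>V. if x \<in> neg_nbrs u then f x else 0)"
    by (simp add: sum_subtractf)
  also have "\<dots> = sum f (pos_nbrs u) - sum f (neg_nbrs u)"
    using finite_vertices pos_nbrs_subset neg_nbrs_subset
    by (simp add: sum.inter_restrict[symmetric] Int_absorb1)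
  finally show ?thesis .
qed

lemma adj_sq_eq: "adj_sq V E \<sigma> u v = (\<Sum>x\<in>pos_nbrs u. A x v) - (\<Sum>x\<in>neg_nbrs u. A x v)"
  unfolding adj_sq_def by (rule sum_adj_row)

lemma adj_sq_diag: "adj_sq V E \<sigma> u u = int (degree V E u)"
proof -
  have "(\<Sum>x\<in>pos_nbrs u. A x u) = (\<Sum>x\<in>pos_nbrs u. 1)"
    by (intro sum.cong refl) (metis adj_eq_1_iff pos_nbrs_sym)
  moreover have "(\<Sum>x\<in>neg_nbrs u. A x u) = (\<Sum>x\<in>neg_nbrs u. -1)"
    by (intro sum.cong refl) (metis adj_eq_minus_1_iff neg_nbrs_sym)
  ultimately show ?thesis
    by (simp add: adj_sq_eq degree_eq)
qed

lemma row_sum_adj: "(\<Sum>x\<in>V. A u x) = net_degree V E \<sigma> u"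
  using sum_adj_row[of u "\<lambda>_. 1"] by (simp add: net_degree_eq)

lemma row_sum_adj_sq:
  assumes "net_regular V E \<sigma> \<rho>" and "u \<in> V"
  shows "(\<Sum>v\<in>V. adj_sq V E \<sigma> u v) = \<rho>\<^sup>2"
proof -
  have net_deg: "(\<Sum>x\<in>V. A w x) = \<rho>" if "w \<in> V" for w
    using assms(1) that by (simp add: row_sum_adj net_regular_def)
  have "(\<Sum>v\<in>V. adj_sq V E \<sigma> u v) = (\<Sum>v\<in>V. \<Sum>w\<in>V. A u w * A w v)"
    unfolding adj_sq_def ..
  also have "\<dots> = (\<Sum>w\<in>V. A u w * (\<Sum>v\<in>V. A w v))"
    by (subst sum.swap) (simp add: sum_distrib_left)
  also have "\<dots> = (\<Sum>w\<in>V. A u w) * \<rho>"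
    by (simp add: net_deg sum_distrib_right)
  also have "\<dots> = \<rho>\<^sup>2"
    using net_deg[OF assms(2)] by (simp add: power2_eq_square)
  finally show ?thesis .
qed

end

locale sgraph_r5_a2_b0 = sgraph +
  assumes regular: "regular V E 5"
    and net_regular: "net_regular V E \<sigma> 1"
    and adj_sq_pos_nbr: "v \<in> pos_nbrs u \<Longrightarrow> adj_sq V E \<sigma> u v = 2"
    and adj_sq_neg_nbr: "v \<in> neg_nbrs u \<Longrightarrow> adj_sq V E \<sigma> u v = 0"
begin

lemma card_pos_nbrs: "u \<in> V \<Longrightarrow> card (pos_nbrs u) = 3"
  and card_neg_nbrs: "u \<in> V \<Longrightarrow> card (neg_nbrs u) = 2"
  using regular net_regular degree_eq[of u] net_degree_eq[of u]
  unfolding regular_def net_regular_def by force+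

lemma neg_nbrs_eq:
  assumes "x \<in> neg_nbrs u" "y \<in> neg_nbrs u" "x \<noteq> y"
  shows "neg_nbrs u = {x, y}"
proof -
  have "u \<in> V"
    using assms(1) neg_nbrs_sym neg_nbrs_subset by blast
  then show ?thesis
    using assms card_neg_nbrs by (intro card_subset_eq[symmetric]) auto
qed

end

locale sgraph_r5_a2_b0_star = sgraph_r5_a2_b0 +
  fixes u p\<^sub>1 p\<^sub>2 p\<^sub>3 m\<^sub>1 m\<^sub>2 :: 'a
  assumes center: "u \<in> V"
    and pos_nbrs_center: "pos_nbrs u = {p\<^sub>1, p\<^sub>2, p\<^sub>3}"
    and neg_nbrs_center: "neg_nbrs u = {m\<^sub>1, m\<^sub>2}"
    and distinct_pos: "p\<^sub>1 \<noteq> p\<^sub>2" "p\<^sub>1 \<noteq> p\<^sub>3" "p\<^sub>2 \<noteq> p\<^sub>3"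
    and distinct_neg: "m\<^sub>1 \<noteq> m\<^sub>2"
begin

lemma adj_sq_center:
  "adj_sq V E \<sigma> u w = A p\<^sub>1 w + A p\<^sub>2 w + A p\<^sub>3 w - A m\<^sub>1 w - A m\<^sub>2 w"
  using distinct_pos distinct_neg by (simp add: adj_sq_eq pos_nbrs_center neg_nbrs_center)

lemma star_equations:
  "A p\<^sub>1 p\<^sub>2 + A p\<^sub>1 p\<^sub>3 - A p\<^sub>1 m\<^sub>1 - A p\<^sub>1 m\<^sub>2 = 2"
  "A p\<^sub>1 p\<^sub>2 + A p\<^sub>2 p\<^sub>3 - A p\<^sub>2 m\<^sub>1 - A p\<^sub>2 m\<^sub>2 = 2"
  "A p\<^sub>1 p\<^sub>3 + A p\<^sub>2 p\<^sub>3 - A p\<^sub>3 m\<^sub>1 - A p\<^sub>3 m\<^sub>2 = 2"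
  "A p\<^sub>1 m\<^sub>1 + A p\<^sub>2 m\<^sub>1 + A p\<^sub>3 m\<^sub>1 = A m\<^sub>1 m\<^sub>2"
  "A p\<^sub>1 m\<^sub>2 + A p\<^sub>2 m\<^sub>2 + A p\<^sub>3 m\<^sub>2 = A m\<^sub>1 m\<^sub>2"
proof -
  have "adj_sq V E \<sigma> u p\<^sub>1 = 2" "adj_sq V E \<sigma> u p\<^sub>2 = 2" "adj_sq V E \<sigma> u p\<^sub>3 = 2"
    using adj_sq_pos_nbr pos_nbrs_center by auto
  moreover have "adj_sq V E \<sigma> u m\<^sub>1 = 0" "adj_sq V E \<sigma> u m\<^sub>2 = 0"
    using adj_sq_neg_nbr neg_nbrs_center by auto
  ultimately show
    "A p\<^sub>1 p\<^sub>2 + A p\<^sub>1 p\<^sub>3 - A p\<^sub>1 m\<^sub>1 - A p\<^sub>1 m\<^sub>2 = 2"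
    "A p\<^sub>1 p\<^sub>2 + A p\<^sub>2 p\<^sub>3 - A p\<^sub>2 m\<^sub>1 - A p\<^sub>2 m\<^sub>2 = 2"
    "A p\<^sub>1 p\<^sub>3 + A p\<^sub>2 p\<^sub>3 - A p\<^sub>3 m\<^sub>1 - A p\<^sub>3 m\<^sub>2 = 2"
    "A p\<^sub>1 m\<^sub>1 + A p\<^sub>2 m\<^sub>1 + A p\<^sub>3 m\<^sub>1 = A m\<^sub>1 m\<^sub>2"
    "A p\<^sub>1 m\<^sub>2 + A p\<^sub>2 m\<^sub>2 + A p\<^sub>3 m\<^sub>2 = A m\<^sub>1 m\<^sub>2"
    unfolding adj_sq_center
    by (simp_all add: adj_sym[of p\<^sub>2 p\<^sub>1] adj_sym[of p\<^sub>3 p\<^sub>1]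
        adj_sym[of p\<^sub>3 p\<^sub>2] adj_sym[of m\<^sub>1 p\<^sub>1] adj_sym[of m\<^sub>1 p\<^sub>2] adj_sym[of m\<^sub>1 p\<^sub>3]
        adj_sym[of m\<^sub>2])
qed

(* The sum of the five equations, in which the terms A p m cancel. *)
lemma triangle_sum: "A p\<^sub>1 p\<^sub>2 + A p\<^sub>1 p\<^sub>3 + A p\<^sub>2 p\<^sub>3 = 3 + A m\<^sub>1 m\<^sub>2"
  using star_equations by linarith

lemma neg_nbrs_center_not_neg_adjacent: "A m\<^sub>1 m\<^sub>2 \<noteq> -1"
proof
  assume "A m\<^sub>1 m\<^sub>2 = -1"
  then have "m\<^sub>2 \<in> neg_nbrs m\<^sub>1"
    using adj_eq_minus_1_iff by blast
  moreover have "u \<in> neg_nbrs m\<^sub>1" "u \<noteq> m\<^sub>2"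
    using neg_nbrs_center neg_nbrs_sym[of u m\<^sub>1] not_own_nbr(2)[of u] by auto
  ultimately have "neg_nbrs m\<^sub>1 = {u, m\<^sub>2}"
    using neg_nbrs_eq by blast
  moreover have "p \<noteq> u" "p \<noteq> m\<^sub>2" if "p \<in> pos_nbrs u" for p
    using that not_own_nbr(1)[of u] pos_neg_nbrs_disjoint[of u] neg_nbrs_center by auto
  ultimately have "A p m\<^sub>1 \<ge> 0" if "p \<in> pos_nbrs u" for p
    using that adj_cases[of m\<^sub>1 p] adj_eq_minus_1_iff[of m\<^sub>1 p] adj_sym[of m\<^sub>1 p] by auto
  then have "A p\<^sub>1 m\<^sub>1 \<ge> 0" "A p\<^sub>2 m\<^sub>1 \<ge> 0" "A p\<^sub>3 m\<^sub>1 \<ge> 0"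
    using pos_nbrs_center by auto
  then show False
    using star_equations(4) \<open>A m\<^sub>1 m\<^sub>2 = -1\<close> by linarith
qed

lemma neg_nbrs_center_nonadjacent: "A m\<^sub>1 m\<^sub>2 = 0"
proof -
  have "A m\<^sub>1 m\<^sub>2 \<le> 0"
    using triangle_sum adj_le_1[of p\<^sub>1 p\<^sub>2] adj_le_1[of p\<^sub>1 p\<^sub>3] adj_le_1[of p\<^sub>2 p\<^sub>3]
    by linarith
  then show ?thesis
    using neg_nbrs_center_not_neg_adjacent adj_cases[of m\<^sub>1 m\<^sub>2] by auto
qed

lemma pos_nbrs_center_triangle: "A p\<^sub>1 p\<^sub>2 = 1" "A p\<^sub>1 p\<^sub>3 = 1" "A p\<^sub>2 p\<^sub>3 = 1"
  using triangle_sum neg_nbrs_center_nonadjacent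
    adj_le_1[of p\<^sub>1 p\<^sub>2] adj_le_1[of p\<^sub>1 p\<^sub>3] adj_le_1[of p\<^sub>2 p\<^sub>3]
  by linarith+

lemma pos_nbrs_center_adjacent:
  assumes "p \<in> pos_nbrs u" "q \<in> pos_nbrs u" "p \<noteq> q"
  shows "q \<in> pos_nbrs p"
proof -
  have "p \<in> {p\<^sub>1, p\<^sub>2, p\<^sub>3}" "q \<in> {p\<^sub>1, p\<^sub>2, p\<^sub>3}"
    using assms pos_nbrs_center by auto
  then show ?thesis
    using assms(3) pos_nbrs_center_triangle
    by (auto simp: adj_eq_1_iff[symmetric] adj_sym[of p\<^sub>2 p\<^sub>1] adj_sym[of p\<^sub>3 p\<^sub>1] adj_sym[of p\<^sub>3 p\<^sub>2])
qed

lemma pos_nbrs_of_pos_nbr: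
  assumes "p \<in> pos_nbrs u"
  shows "pos_nbrs p = insert u (pos_nbrs u - {p})"
proof (rule card_subset_eq[symmetric])
  show "insert u (pos_nbrs u - {p}) \<subseteq> pos_nbrs p"
    using assms pos_nbrs_center_adjacent pos_nbrs_sym by blast
  have "p \<in> V"
    using assms pos_nbrs_subset by blast
  then show "card (insert u (pos_nbrs u - {p})) = card (pos_nbrs p)"
    using assms center not_own_nbr by (simp add: card_pos_nbrs)
qed simp

lemma pos_neg_center_nonadjacent:
  assumes "p \<in> pos_nbrs u" "m \<in> neg_nbrs u"
  shows "A p m = 0"
proof -
  have not_pos: "A p m' \<le> 0" if "m' \<in> neg_nbrs u" for m'
  proof -
    have "m' \<noteq> u" "m' \<notin> pos_nbrs u"
      using that not_own_nbr(2)[of u] pos_neg_nbrs_disjoint[of u] by auto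
    then have "A p m' \<noteq> 1"
      unfolding adj_eq_1_iff pos_nbrs_of_pos_nbr[OF assms(1)] by simp
    then show ?thesis
      using adj_cases[of p m'] by auto
  qed
  have "p = p\<^sub>1 \<or> p = p\<^sub>2 \<or> p = p\<^sub>3"
    using assms(1) pos_nbrs_center by auto
  then have "A p m\<^sub>1 + A p m\<^sub>2 = 0"
    using star_equations(1-3) pos_nbrs_center_triangle by (elim disjE) simp_all
  moreover have "A p m\<^sub>1 \<le> 0" "A p m\<^sub>2 \<le> 0"
    using not_pos[of m\<^sub>1] not_pos[of m\<^sub>2] neg_nbrs_center by simp_all
  moreover have "m = m\<^sub>1 \<or> m = m\<^sub>2"
    using assms(2) neg_nbrs_center by auto
  ultimately show ?thesis
    by auto
qed

lemma neg_nbr_center_isolated: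
  assumes "m \<in> neg_nbrs u" "E u x" "x \<noteq> m"
  shows "\<not> E m x"
proof -
  have "A m x = 0"
  proof (cases "x \<in> pos_nbrs u")
    case True
    then show ?thesis
      using assms(1) pos_neg_center_nonadjacent adj_sym by metis
  next
    case False
    then have "x \<in> neg_nbrs u"
      using assms(2) edge_iff_nbr by blast
    then have "m = m\<^sub>1 \<and> x = m\<^sub>2 \<or> m = m\<^sub>2 \<and> x = m\<^sub>1"
      using assms(1,3) neg_nbrs_center by auto
    then show ?thesis
      using neg_nbrs_center_nonadjacent adj_sym[of m\<^sub>2 m\<^sub>1] by auto
  qed
  then show ?thesis
    using adj_eq_0_iff by blast
qed

end

context sgraph_r5_a2_b0
begin

lemma star_at:
  assumes "u \<in> V"
  obtains p\<^sub>1 p\<^sub>2 p\<^sub>3 m\<^sub>1 m\<^sub>2 where "sgraph_r5_a2_b0_star V E \<sigma> u p\<^sub>1 p\<^sub>2 p\<^sub>3 m\<^sub>1 m\<^sub>2"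
proof -
  obtain p\<^sub>1 p\<^sub>2 p\<^sub>3 where "pos_nbrs u = {p\<^sub>1, p\<^sub>2, p\<^sub>3}" "p\<^sub>1 \<noteq> p\<^sub>2" "p\<^sub>1 \<noteq> p\<^sub>3" "p\<^sub>2 \<noteq> p\<^sub>3"
    using card_pos_nbrs[OF assms] unfolding card_3_iff by blast
  moreover obtain m\<^sub>1 m\<^sub>2 where "neg_nbrs u = {m\<^sub>1, m\<^sub>2}" "m\<^sub>1 \<noteq> m\<^sub>2"
    using card_neg_nbrs[OF assms] unfolding card_2_iff by blast
  ultimately have "sgraph_r5_a2_b0_star_axioms V E \<sigma> u p\<^sub>1 p\<^sub>2 p\<^sub>3 m\<^sub>1 m\<^sub>2"
    using assms by (simp add: sgraph_r5_a2_b0_star_axioms_def)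
  then show thesis
    by (intro that sgraph_r5_a2_b0_star.intro sgraph_r5_a2_b0.intro sgraph_axioms
        sgraph_r5_a2_b0_axioms)
qed

lemma pos_nbrs_adjacent:
  "u \<in> V \<Longrightarrow> p \<in> pos_nbrs u \<Longrightarrow> q \<in> pos_nbrs u \<Longrightarrow> p \<noteq> q \<Longrightarrow> q \<in> pos_nbrs p"
  by (metis star_at sgraph_r5_a2_b0_star.pos_nbrs_center_adjacent)

lemma neg_nbr_isolated:
  "u \<in> V \<Longrightarrow> m \<in> neg_nbrs u \<Longrightarrow> E u x \<Longrightarrow> x \<noteq> m \<Longrightarrow> \<not> E m x"
  by (metis star_at sgraph_r5_a2_b0_star.neg_nbr_center_isolated)

end

locale srsg_r5_a2_b0 = sgraph_r5_a2_b0 +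
  fixes c :: int
  assumes adj_sq_non_nbr: "u \<in> V \<Longrightarrow> v \<in> non_nbrs u \<Longrightarrow> adj_sq V E \<sigma> u v = c"
begin

lemma row_sum_adj_sq_eq:
  assumes "u \<in> V"
  shows "(\<Sum>v\<in>V. adj_sq V E \<sigma> u v) = 11 + c * int (card (non_nbrs u))"
proof -
  have "(\<Sum>v\<in>pos_nbrs u. adj_sq V E \<sigma> u v) = (\<Sum>v\<in>pos_nbrs u. 2)"
    by (intro sum.cong refl) (simp add: adj_sq_pos_nbr)
  moreover have "(\<Sum>v\<in>neg_nbrs u. adj_sq V E \<sigma> u v) = 0"
    by (simp add: adj_sq_neg_nbr)
  moreover have "(\<Sum>v\<in>non_nbrs u. adj_sq V E \<sigma> u v) = (\<Sum>v\<in>non_nbrs u. c)"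
    by (intro sum.cong refl) (simp add: adj_sq_non_nbr assms)
  moreover have "adj_sq V E \<sigma> u u = 5"
    using assms regular by (simp add: adj_sq_diag regular_def)
  ultimately show ?thesis
    using assms by (simp add: sum_vertices_split[OF assms] card_pos_nbrs)
qed

lemma c_times_card_non_nbrs: "u \<in> V \<Longrightarrow> c * int (card (non_nbrs u)) = -10"
  using row_sum_adj_sq[OF net_regular] row_sum_adj_sq_eq by fastforce

lemma pos_nbrs_of_neg_nbr_subset:
  assumes "u \<in> V" "m \<in> neg_nbrs u"
  shows "pos_nbrs m \<subseteq> non_nbrs u"
proof
  fix w
  assume w: "w \<in> pos_nbrs m"
  have "w \<noteq> u"
    using w assms(2) neg_nbrs_sym[of m u] pos_neg_nbrs_disjoint[of m] by auto
  moreover have "\<not> E u w"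
  proof
    assume "E u w"
    moreover have "w \<noteq> m"
      using w not_own_nbr(1)[of m] by auto
    ultimately have "\<not> E m w"
      using neg_nbr_isolated assms by blast
    then show False
      using w edge_iff_nbr[of m w] by auto
  qed
  ultimately show "w \<in> non_nbrs u"
    using w pos_nbrs_subset[of m] unfolding non_nbrs_def by auto
qed

lemma pos_nbrs_of_neg_nbrs_disjoint:
  assumes "u \<in> V" "m \<in> neg_nbrs u" "m' \<in> neg_nbrs u" "m \<noteq> m'"
  shows "pos_nbrs m \<inter> pos_nbrs m' = {}"
proof (rule ccontr)
  assume "pos_nbrs m \<inter> pos_nbrs m' \<noteq> {}"
  then obtain w where "w \<in> pos_nbrs m" "w \<in> pos_nbrs m'"
    by blast
  then have "w \<in> V" "m \<in> pos_nbrs w" "m' \<in> pos_nbrs w"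
    using pos_nbrs_subset[of m] pos_nbrs_sym[of w m] pos_nbrs_sym[of w m'] by auto
  then have "m' \<in> pos_nbrs m"
    using pos_nbrs_adjacent[of w m m'] assms(4) by simp
  then have "E m m'"
    using edge_iff_nbr[of m m'] by auto
  moreover have "E u m'"
    using assms(3) edge_iff_nbr[of u m'] by auto
  ultimately show False
    using neg_nbr_isolated[OF assms(1,2), of m'] assms(4) by simp
qed

lemma card_pos_nbrs_of_neg_nbrs:
  assumes "u \<in> V"
  shows "card (\<Union>(pos_nbrs ` neg_nbrs u)) = 6"
proof -
  obtain m\<^sub>1 m\<^sub>2 where M: "neg_nbrs u = {m\<^sub>1, m\<^sub>2}" "m\<^sub>1 \<noteq> m\<^sub>2"
    using card_neg_nbrs[OF assms] unfolding card_2_iff by blast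
  then have "m\<^sub>1 \<in> V" "m\<^sub>2 \<in> V"
    using neg_nbrs_subset[of u] by auto
  moreover have "pos_nbrs m\<^sub>1 \<inter> pos_nbrs m\<^sub>2 = {}"
    using pos_nbrs_of_neg_nbrs_disjoint[OF assms] M by auto
  ultimately show ?thesis
    using M by (simp add: card_Un_disjoint card_pos_nbrs)
qed

lemma c_eq_minus_1: "u \<in> V \<Longrightarrow> c = -1"
  and card_non_nbrs: "u \<in> V \<Longrightarrow> card (non_nbrs u) = 10"
proof -
  assume u: "u \<in> V"
  define k where "k = int (card (non_nbrs u))"
  have "card (\<Union>(pos_nbrs ` neg_nbrs u)) \<le> card (non_nbrs u)"
    using pos_nbrs_of_neg_nbr_subset[OF u] by (intro card_mono) auto
  then have k: "6 \<le> k"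
    unfolding k_def card_pos_nbrs_of_neg_nbrs[OF u] by simp
  have ck: "c * k = -10"
    unfolding k_def by (rule c_times_card_non_nbrs[OF u])
  have "c < 0"
  proof (rule ccontr)
    assume "\<not> c < 0"
    then have "0 \<le> c * k"
      using k by simp
    then show False
      using ck by simp
  qed
  moreover have "\<not> c \<le> -2"
  proof
    assume "c \<le> -2"
    then have "c * k \<le> -2 * k"
      using k by (intro mult_right_mono) simp_all
    then show False
      using ck k by simp
  qed
  ultimately show "c = -1"
    by simp
  then show "card (non_nbrs u) = 10"
    using ck unfolding k_def by simp
qed

definition far_vertices :: "'a \<Rightarrow> 'a set" where
  "far_vertices u = non_nbrs u - \<Union>(pos_nbrs ` neg_nbrs u)"

lemma far_vertices_nonempty:
  assumes "u \<in> V"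
  shows "far_vertices u \<noteq> {}"
proof
  assume "far_vertices u = {}"
  then have "non_nbrs u \<subseteq> \<Union>(pos_nbrs ` neg_nbrs u)"
    unfolding far_vertices_def by blast
  then have "card (non_nbrs u) \<le> 6"
    using card_pos_nbrs_of_neg_nbrs[OF assms] card_mono
    by (metis finite_UN_I finite_neg_nbrs finite_pos_nbrs)
  then show False
    using card_non_nbrs[OF assms] by simp
qed

lemma far_vertex_neg_nbr:
  assumes "u \<in> V" "w \<in> far_vertices u"
  shows "\<exists>p\<in>pos_nbrs u. w \<in> neg_nbrs p"
proof (rule ccontr)
  assume none: "\<not> (\<exists>p\<in>pos_nbrs u. w \<in> neg_nbrs p)"
  have "0 \<le> A x w" if "x \<in> pos_nbrs u" for x
    using that none adj_cases[of x w] adj_eq_minus_1_iff[of x w] by auto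
  then have "0 \<le> (\<Sum>x\<in>pos_nbrs u. A x w)"
    by (rule sum_nonneg)
  moreover have "A x w \<le> 0" if "x \<in> neg_nbrs u" for x
    using that assms(2) adj_cases[of x w] adj_eq_1_iff[of x w] unfolding far_vertices_def by auto
  then have "(\<Sum>x\<in>neg_nbrs u. A x w) \<le> 0"
    by (rule sum_nonpos)
  moreover have "adj_sq V E \<sigma> u w = -1"
    using assms(2) adj_sq_non_nbr[OF assms(1)] c_eq_minus_1[OF assms(1)]
    unfolding far_vertices_def by auto
  ultimately show False
    unfolding adj_sq_eq by linarith
qed

lemma far_vertices_closed:
  assumes "u \<in> V" "y \<in> far_vertices u" "w \<in> pos_nbrs y"
  shows "w \<in> far_vertices u"
proof -
  have y: "y \<noteq> u" "\<not> E u y" "\<And>m. m \<in> neg_nbrs u \<Longrightarrow> y \<notin> pos_nbrs m"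
    using assms(2) unfolding far_vertices_def non_nbrs_def by auto
  have w: "w \<in> V" "y \<in> pos_nbrs w"
    using assms(3) pos_nbrs_subset[of y] pos_nbrs_sym[of w y] by auto
  have "w \<noteq> u"
    using w(2) y(2) edge_iff_nbr[of u y] by auto
  moreover have "w \<notin> pos_nbrs u"
  proof
    assume "w \<in> pos_nbrs u"
    then have "u \<in> pos_nbrs w"
      using pos_nbrs_sym[of u w] by simp
    then have "y \<in> pos_nbrs u"
      using pos_nbrs_adjacent[of w u y] w y(1) by simp
    then show False
      using y(2) edge_iff_nbr[of u y] by simp
  qed
  moreover have "w \<notin> neg_nbrs u"
    using w(2) y(3) by blast
  moreover have "w \<notin> pos_nbrs m" if m: "m \<in> neg_nbrs u" for m
  proof
    assume "w \<in> pos_nbrs m"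
    then have "m \<in> pos_nbrs w"
      using pos_nbrs_sym[of m w] by simp
    moreover have "m \<noteq> y"
      using m y(2) edge_iff_nbr[of u m] by auto
    ultimately have "y \<in> pos_nbrs m"
      using pos_nbrs_adjacent[of w m y] w by simp
    then show False
      using m y(3) by blast
  qed
  ultimately show ?thesis
    using w(1) edge_iff_nbr[of u w] unfolding far_vertices_def non_nbrs_def by auto
qed

lemma vertices_empty: "V = {}"
proof (rule ccontr)
  assume "V \<noteq> {}"
  then obtain u where u: "u \<in> V"
    by blast
  obtain v where v: "v \<in> far_vertices u"
    using far_vertices_nonempty[OF u] by blast
  then have "v \<in> V"
    unfolding far_vertices_def non_nbrs_def by auto
  define K where "K = insert v (pos_nbrs v)"
  have card_K: "card K = 4"
    using card_pos_nbrs[OF \<open>v \<in> V\<close>] not_own_nbr(1)[of v] unfolding K_def by simp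
  have K_clique: "E x y" if "x \<in> K" "y \<in> K" "x \<noteq> y" for x y
    using that pos_nbrs_adjacent[OF \<open>v \<in> V\<close>, of x y] edge_iff_nbr edge_sym unfolding K_def by blast
  have "\<forall>w\<in>K. \<exists>p. p \<in> pos_nbrs u \<and> w \<in> neg_nbrs p"
    using far_vertex_neg_nbr[OF u] far_vertices_closed[OF u v] v unfolding K_def by blast
  then obtain f where f: "\<And>w. w \<in> K \<Longrightarrow> f w \<in> pos_nbrs u \<and> w \<in> neg_nbrs (f w)"
    by metis
  have "\<not> inj_on f K"
  proof
    assume "inj_on f K"
    then have "card K \<le> card (pos_nbrs u)"
      using f by (intro card_inj_on_le) auto
    then show False
      using card_K card_pos_nbrs[OF u] by simp
  qed
  then obtain w\<^sub>1 w\<^sub>2 where w: "w\<^sub>1 \<in> K" "w\<^sub>2 \<in> K" "w\<^sub>1 \<noteq> w\<^sub>2" "f w\<^sub>1 = f w\<^sub>2"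
    unfolding inj_on_def by blast
  then have "f w\<^sub>1 \<in> V" "w\<^sub>1 \<in> neg_nbrs (f w\<^sub>1)" "E (f w\<^sub>1) w\<^sub>2"
    using f pos_nbrs_subset edge_iff_nbr by (metis subsetD)+
  then have "\<not> E w\<^sub>1 w\<^sub>2"
    using neg_nbr_isolated w(3) by blast
  then show False
    using K_clique w by blast
qed

end

theorem mainTheorem8:
  fixes V :: "'a set" and E :: "'a \<Rightarrow> 'a \<Rightarrow> bool" and \<sigma> :: "'a \<Rightarrow> 'a \<Rightarrow> int"
    and n :: nat and a b c :: int
  assumes "srsg V E \<sigma> n 5 a b c"
    and "connected_graph V E"
    and "\<not> complete_graph V E"
    and "regular V E 5"
    and "net_regular V E \<sigma> 1"
    and "class_C1 V E a b c \<or> class_C4 V E a b c \<or> class_C5 V E a b c"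
  shows "\<not> (a = 2 \<and> b = 0)"
proof
  assume ab: "a = 2 \<and> b = 0"
  from assms(1) interpret sgraph V E \<sigma>
    by unfold_locales (simp add: srsg_def)
  from assms(1,4,5) ab interpret srsg_r5_a2_b0 V E \<sigma> c
    by unfold_locales (auto simp: srsg_def pos_nbrs_def neg_nbrs_def non_nbrs_def dest: edge_vertices)
  obtain u v where "E u v"
    using assms(1) unfolding srsg_def edgeless_def by blast
  then show False
    using vertices_empty edge_vertices by blast
qed

end
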